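(* Problem (S) has at most one weak solution belonging to $C^1[0,1]$.
   Context: Fix $\epsilon>0$, $\Omega_A>0$, $\Omega_D>0$, $\alpha,\beta\in\mathbb{R}$. Problem (S): $\tfrac{\epsilon}{2}\rho''+(2\rho-1)\rho'+\Omega_A(1-\rho)-\Omega_D\rho=0$ on $(0,1)$, $\rho(0)=\alpha$, $\rho(1)=1-\beta$. A weak solution of (S) is a function $\rho\in W^{1,2}(0,1)$ with $\rho(0)=\alpha$, $\rho(1)=1-\beta$ and $\int_0^1\big[\tfrac{\epsilon}{2}\rho'\varphi'-\big((2\rho-1)\rho'+\Omega_A(1-\rho)-\Omega_D\rho\big)\varphi\big]dx=0$ for all $\varphi\in W^{1,2}_0(0,1)$. *)

theory Defs
  imports "HOL-Analysis.Analysis"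
begin

definition L2_01 :: "(real \<Rightarrow> real) \<Rightarrow> bool" where
  "L2_01 f \<longleftrightarrow> set_borel_measurable lborel {0<..<1} f \<and>
                 set_integrable lborel {0<..<1} (\<lambda>x. (f x)^2)"

definition test_fun :: "(real \<Rightarrow> real) \<Rightarrow> bool" where
  "test_fun \<psi> \<longleftrightarrow>
     (\<exists>D :: nat \<Rightarrow> real \<Rightarrow> real. D 0 = \<psi> \<and>
        (\<forall>k x. (D k has_real_derivative D (Suc k) x) (at x))) \<and>
     (\<exists>a b. 0 < a \<and> a \<le> b \<and> b < 1 \<and> (\<forall>x. x \<notin> {a..b} \<longrightarrow> \<psi> x = 0))"

definition W12_deriv :: "(real \<Rightarrow> real) \<Rightarrow> (real \<Rightarrow> real) \<Rightarrow> bool" where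
  "W12_deriv f g \<longleftrightarrow> L2_01 f \<and> L2_01 g \<and>
     (\<forall>\<psi>. test_fun \<psi> \<longrightarrow>
        (LINT x:{0<..<1}|lborel. f x * deriv \<psi> x) = - (LINT x:{0<..<1}|lborel. g x * \<psi> x))"

definition W12_0_deriv :: "(real \<Rightarrow> real) \<Rightarrow> (real \<Rightarrow> real) \<Rightarrow> bool" where
  "W12_0_deriv \<phi> h \<longleftrightarrow> W12_deriv \<phi> h \<and>
     (\<exists>\<psi>s :: nat \<Rightarrow> real \<Rightarrow> real. (\<forall>n. test_fun (\<psi>s n)) \<and>
        (\<lambda>n. LINT x:{0<..<1}|lborel. (\<psi>s n x - \<phi> x)^2 + (deriv (\<psi>s n) x - h x)^2)
          \<longlonglongrightarrow> 0)"

text \<open>Weak solution of problem (S). W^{1,2}(0,1) functions are identified with their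
  continuous representative on [0,1], so boundary values are point values.\<close>
definition weak_solution_S ::
  "real \<Rightarrow> real \<Rightarrow> real \<Rightarrow> real \<Rightarrow> real \<Rightarrow> (real \<Rightarrow> real) \<Rightarrow> bool" where
  "weak_solution_S \<epsilon> \<Omega>A \<Omega>D \<alpha> \<beta> \<rho> \<longleftrightarrow>
     continuous_on {0..1} \<rho> \<and> \<rho> 0 = \<alpha> \<and> \<rho> 1 = 1 - \<beta> \<and>
     (\<exists>g. W12_deriv \<rho> g \<and>
        (\<forall>\<phi> h. W12_0_deriv \<phi> h \<longrightarrow>
           (LINT x:{0<..<1}|lborel.
              \<epsilon> / 2 * g x * h x
              - ((2 * \<rho> x - 1) * g x + \<Omega>A * (1 - \<rho> x) - \<Omega>D * \<rho> x) * \<phi> x) = 0))"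

definition C1_01 :: "(real \<Rightarrow> real) \<Rightarrow> bool" where
  "C1_01 f \<longleftrightarrow> (\<exists>D. continuous_on {0..1} D \<and>
       (\<forall>x\<in>{0..1}. (f has_real_derivative D x) (at x within {0..1})))"

end

theory Submission
  imports Defs "HOL-Computational_Algebra.Polynomial"
begin

text \<open>
  Subtracting the weak formulations of two \<open>C\<^sup>1\<close> solutions \<open>\<rho>\<^sub>1, \<rho>\<^sub>2\<close> and integrating the
  convection terms by parts shows that \<open>w = \<rho>\<^sub>1 - \<rho>\<^sub>2\<close> satisfies
  \<open>\<integral> V \<psi>' + (\<Omega>\<^sub>A + \<Omega>\<^sub>D) w \<psi> = 0\<close> for every test function \<open>\<psi>\<close>, where
  \<open>V = \<epsilon>/2 w' + (\<rho>\<^sub>1 + \<rho>\<^sub>2 - 1) w\<close>. Replacing the weak derivative by the classical one needs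
  the fundamental lemma of the calculus of variations, hence smooth bump functions.
  If \<open>w\<close> were positive somewhere, it would be positive on an interval \<open>(c, d)\<close> with
  \<open>w c = w d = 0\<close>, so that \<open>V c \<ge> 0 \<ge> V d\<close>; a plateau test function supported in
  \<open>(c, d)\<close> with steep flanks then makes the integral positive.
\<close>

section \<open>Smooth functions\<close>

definition smooth :: "(real \<Rightarrow> real) \<Rightarrow> bool" where
  "smooth f \<longleftrightarrow> (\<exists>D. D 0 = f \<and> (\<forall>k x. (D k has_real_derivative D (Suc k) x) (at x)))"

lemma test_fun_iff_smooth:
  "test_fun \<psi> \<longleftrightarrow> smooth \<psi> \<and> (\<exists>a b. 0 < a \<and> a \<le> b \<and> b < 1 \<and> (\<forall>x. x \<notin> {a..b} \<longrightarrow> \<psi> x = 0))"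
  unfolding test_fun_def smooth_def ..

lemma Leibniz_has_real_derivative:
  fixes A B :: "nat \<Rightarrow> real \<Rightarrow> real"
  assumes A: "\<And>k x. (A k has_real_derivative A (Suc k) x) (at x)"
    and B: "\<And>k x. (B k has_real_derivative B (Suc k) x) (at x)"
  shows "((\<lambda>x. \<Sum>i = 0..n. of_nat (n choose i) * A i x * B (n - i) x) has_real_derivative
          (\<Sum>i = 0..Suc n. of_nat (Suc n choose i) * A i x * B (Suc n - i) x)) (at x)"
proof -
  define h where "h i = of_nat (n choose i) * A i x * B (Suc n - i) x" for i
  have deriv: "((\<lambda>x. \<Sum>i = 0..n. of_nat (n choose i) * A i x * B (n - i) x) has_real_derivative
      (\<Sum>i = 0..n. of_nat (n choose i) * A (Suc i) x * B (n - i) x + h i)) (at x)"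
    by (rule DERIV_sum) (auto intro!: derivative_eq_intros A B simp: h_def algebra_simps Suc_diff_le)
  have shift: "(\<Sum>i = 0..n. h i) = h 0 + (\<Sum>i = 0..n. h (Suc i))"
  proof -
    have "(\<Sum>i = 0..n. h i) = (\<Sum>i = 0..Suc n. h i)" by (simp add: h_def)
    also have "\<dots> = h 0 + (\<Sum>i = 0..n. h (Suc i))"
      by (subst sum.atLeast0_atMost_Suc_shift) (simp add: o_def)
    finally show ?thesis .
  qed
  have "(\<Sum>i = 0..Suc n. of_nat (Suc n choose i) * A i x * B (Suc n - i) x)
     = A 0 x * B (Suc n) x + (\<Sum>i = 0..n. of_nat (Suc n choose Suc i) * A (Suc i) x * B (n - i) x)"
    by (subst sum.atLeast0_atMost_Suc_shift) (simp add: o_def)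
  also have "\<dots> = A 0 x * B (Suc n) x
      + (\<Sum>i = 0..n. of_nat (n choose i) * A (Suc i) x * B (n - i) x + h (Suc i))"
    by (intro arg_cong2[where f="(+)"] refl sum.cong) (auto simp: h_def algebra_simps)
  also have "\<dots> = (\<Sum>i = 0..n. of_nat (n choose i) * A (Suc i) x * B (n - i) x + h i)"
    unfolding sum.distrib shift by (simp add: h_def)
  finally show ?thesis using deriv by simp
qed

lemma smoothI:
  "D 0 = f \<Longrightarrow> (\<And>k x. (D k has_real_derivative D (Suc k) x) (at x)) \<Longrightarrow> smooth f"
  unfolding smooth_def by blast

lemma smoothE:
  assumes "smooth f"
  obtains D where "D 0 = f" "\<And>k x. (D k has_real_derivative D (Suc k) x) (at x)"
  using assms unfolding smooth_def by blast

lemma smooth_mult: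
  assumes "smooth f" "smooth g" shows "smooth (\<lambda>x. f x * g x)"
proof -
  obtain A B where A: "A 0 = f" "\<And>k x. (A k has_real_derivative A (Suc k) x) (at x)"
    and B: "B 0 = g" "\<And>k x. (B k has_real_derivative B (Suc k) x) (at x)"
    using assms by (metis smoothE)
  show ?thesis
    by (rule smoothI[of "\<lambda>n x. \<Sum>i = 0..n. of_nat (n choose i) * A i x * B (n - i) x"])
       (use A B Leibniz_has_real_derivative[of A B] in auto)
qed

lemma smooth_add:
  assumes "smooth f" "smooth g" shows "smooth (\<lambda>x. f x + g x)"
proof -
  obtain A B where A: "A 0 = f" "\<And>k x. (A k has_real_derivative A (Suc k) x) (at x)"
    and B: "B 0 = g" "\<And>k x. (B k has_real_derivative B (Suc k) x) (at x)"
    using assms by (metis smoothE)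
  show ?thesis
    by (rule smoothI[of "\<lambda>n x. A n x + B n x"]) (use A B in \<open>auto intro: DERIV_add\<close>)
qed

lemma smooth_cmult:
  assumes "smooth f" shows "smooth (\<lambda>x. c * f x)"
proof -
  obtain A where A: "A 0 = f" "\<And>k x. (A k has_real_derivative A (Suc k) x) (at x)"
    using assms by (metis smoothE)
  show ?thesis
    by (rule smoothI[of "\<lambda>n x. c * A n x"]) (use A in \<open>auto intro: DERIV_cmult\<close>)
qed

lemma smooth_diff: "smooth f \<Longrightarrow> smooth g \<Longrightarrow> smooth (\<lambda>x. f x - g x)"
  using smooth_add[of f "\<lambda>x. -1 * g x"] smooth_cmult[of g "-1"] by simp

lemma smooth_compose_affine:
  assumes "smooth f" shows "smooth (\<lambda>x. f (c * x + d))"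
proof -
  obtain A where A: "A 0 = f" "\<And>k x. (A k has_real_derivative A (Suc k) x) (at x)"
    using assms by (metis smoothE)
  have "((\<lambda>x. c ^ k * A k (c * x + d)) has_real_derivative c ^ Suc k * A (Suc k) (c * x + d)) (at x)"
    for k x
    by (auto intro!: derivative_eq_intros DERIV_chain2[OF A(2)] simp: algebra_simps)
  then show ?thesis
    by (intro smoothI[of "\<lambda>n x. c ^ n * A n (c * x + d)"]) (simp_all add: A(1))
qed

lemma smooth_antiderivative:
  assumes "smooth f" "\<And>x. (F has_real_derivative f x) (at x)"
  shows "smooth F"
proof -
  obtain A where A: "A 0 = f" "\<And>k x. (A k has_real_derivative A (Suc k) x) (at x)"
    using assms(1) by (metis smoothE)
  show ?thesis
    by (rule smoothI[of "\<lambda>n. case n of 0 \<Rightarrow> F | Suc m \<Rightarrow> A m"])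
       (use A assms(2) in \<open>auto split: nat.split\<close>)
qed

lemma smooth_has_real_derivative:
  assumes "smooth f" obtains f' where "\<And>x. (f has_real_derivative f' x) (at x)"
  using assms by (metis smoothE)

lemma smooth_imp_continuous_on: "smooth f \<Longrightarrow> continuous_on S f"
  by (metis DERIV_isCont continuous_at_imp_continuous_on smooth_has_real_derivative)

section \<open>A smooth bump function\<close>

lemma poly_mult_exp_neg_tendsto_0: "((\<lambda>t. poly (p :: real poly) t * exp (-t)) \<longlongrightarrow> 0) at_top"
proof -
  have "((\<lambda>t. \<Sum>i\<le>degree p. coeff p i * (t ^ i / exp t)) \<longlongrightarrow> (\<Sum>i\<le>degree p. coeff p i * 0)) at_top"
    by (intro tendsto_sum tendsto_mult tendsto_const tendsto_power_div_exp_0)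
  moreover have "poly p t * exp (-t) = (\<Sum>i\<le>degree p. coeff p i * (t ^ i / exp t))" for t
    by (simp add: poly_altdef sum_distrib_right exp_minus divide_inverse mult.assoc)
  ultimately show ?thesis by simp
qed

definition flat_exp :: "real \<Rightarrow> real" where
  "flat_exp x = (if x > 0 then exp (- inverse x) else 0)"

text \<open>The derivatives of \<open>exp (- 1 / x)\<close> have the form \<open>P (1 / x) * exp (- 1 / x)\<close>;
  differentiating once more turns \<open>P\<close> into \<open>t\<^sup>2 (P - P')\<close>.\<close>

fun flat_exp_poly :: "nat \<Rightarrow> real poly" where
  "flat_exp_poly 0 = 1"
| "flat_exp_poly (Suc k) = pCons 0 (pCons 0 (flat_exp_poly k - pderiv (flat_exp_poly k)))"

definition flat_exp_deriv :: "nat \<Rightarrow> real \<Rightarrow> real" where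
  "flat_exp_deriv k x = (if x > 0 then poly (flat_exp_poly k) (inverse x) * exp (- inverse x) else 0)"

lemma flat_exp_deriv_div_tendsto_0: "((\<lambda>y. flat_exp_deriv k y / y) \<longlongrightarrow> 0) (at_right 0)"
proof -
  have "((\<lambda>t. poly (pCons 0 (flat_exp_poly k)) t * exp (-t)) \<longlongrightarrow> 0) at_top"
    by (rule poly_mult_exp_neg_tendsto_0)
  then have "((\<lambda>y. poly (pCons 0 (flat_exp_poly k)) (inverse y) * exp (- inverse y)) \<longlongrightarrow> 0)
      (at_right (0::real))"
    by (rule filterlim_compose[OF _ filterlim_inverse_at_top_right])
  moreover have "\<forall>\<^sub>F y in at_right 0.
      poly (pCons 0 (flat_exp_poly k)) (inverse y) * exp (- inverse y) = flat_exp_deriv k y / y"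
    using eventually_at_right_less[of "0::real"]
    by eventually_elim (simp add: flat_exp_deriv_def field_simps)
  ultimately show ?thesis by (rule Lim_transform_eventually)
qed

lemma flat_exp_deriv_has_real_derivative:
  "(flat_exp_deriv k has_real_derivative flat_exp_deriv (Suc k) x) (at x)"
proof (cases x "0::real" rule: linorder_cases)
  case less
  have "((\<lambda>_. 0) has_real_derivative flat_exp_deriv (Suc k) x) (at x)"
    using less by (simp add: flat_exp_deriv_def)
  then show ?thesis
    by (rule has_field_derivative_transform_within_open[where S="{..<0}"])
       (use less in \<open>auto simp: flat_exp_deriv_def\<close>)
next
  case equal
  have "((\<lambda>y. (flat_exp_deriv k y - flat_exp_deriv k 0) / (y - 0)) \<longlongrightarrow> 0) (at_right 0)"
    using flat_exp_deriv_div_tendsto_0 by (simp add: flat_exp_deriv_def)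
  moreover have "((\<lambda>y. (flat_exp_deriv k y - flat_exp_deriv k 0) / (y - 0)) \<longlongrightarrow> 0) (at_left 0)"
  proof (rule tendsto_eventually)
    have "\<forall>\<^sub>F y in at_left (0::real). y \<in> {-1<..<0}"
      by (rule eventually_at_left_real) simp
    then show "\<forall>\<^sub>F y in at_left 0. (flat_exp_deriv k y - flat_exp_deriv k 0) / (y - 0) = 0"
      by eventually_elim (simp add: flat_exp_deriv_def)
  qed
  ultimately show ?thesis
    using equal by (simp add: has_field_derivative_iff filterlim_at_split flat_exp_deriv_def)
next
  case greater
  let ?P = "flat_exp_poly k"
  have inv: "(inverse has_real_derivative - (inverse x ^ 2)) (at x)"
    using greater DERIV_inverse[of x] by (simp add: power2_eq_square)
  have "((\<lambda>y. poly ?P (inverse y) * exp (- inverse y)) has_real_derivative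
      poly ?P (inverse x) * (exp (- inverse x) * inverse x ^ 2)
      + poly (pderiv ?P) (inverse x) * (- (inverse x ^ 2)) * exp (- inverse x)) (at x)"
  proof (rule DERIV_mult'[OF DERIV_chain2[OF poly_DERIV inv]])
    show "((\<lambda>y. exp (- inverse y)) has_real_derivative exp (- inverse x) * inverse x ^ 2) (at x)"
      using DERIV_chain2[OF DERIV_exp DERIV_minus[OF inv]] by simp
  qed
  moreover have "poly ?P (inverse x) * (exp (- inverse x) * inverse x ^ 2)
      + poly (pderiv ?P) (inverse x) * (- (inverse x ^ 2)) * exp (- inverse x)
      = flat_exp_deriv (Suc k) x"
    using greater by (simp add: flat_exp_deriv_def algebra_simps power2_eq_square)
  ultimately have "((\<lambda>y. poly ?P (inverse y) * exp (- inverse y)) has_real_derivative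
      flat_exp_deriv (Suc k) x) (at x)"
    by simp
  then show ?thesis
    by (rule has_field_derivative_transform_within_open[where S="{0<..}"])
       (use greater in \<open>auto simp: flat_exp_deriv_def\<close>)
qed

lemma smooth_flat_exp: "smooth flat_exp"
proof -
  have "flat_exp_deriv 0 = flat_exp"
    by (simp add: flat_exp_deriv_def flat_exp_def fun_eq_iff)
  then show ?thesis by (rule smoothI) (rule flat_exp_deriv_has_real_derivative)
qed

definition bump :: "real \<Rightarrow> real" where
  "bump x = flat_exp x * flat_exp (1 - x)"

lemma smooth_bump: "smooth bump"
  unfolding bump_def
  using smooth_mult[OF smooth_flat_exp smooth_compose_affine[OF smooth_flat_exp, of "-1" 1]]
  by simp

definition bump_on :: "real \<Rightarrow> real \<Rightarrow> real \<Rightarrow> real" where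
  "bump_on p q x = bump ((x - p) / (q - p))"

lemma smooth_bump_on: "smooth (bump_on p q)"
  using smooth_compose_affine[OF smooth_bump, of "inverse (q - p)" "- p * inverse (q - p)"]
  by (simp add: bump_on_def[abs_def] divide_inverse algebra_simps)

lemma bump_nonneg: "0 \<le> bump x"
  by (simp add: bump_def flat_exp_def)

lemma bump_eq_0: "x \<le> 0 \<or> 1 \<le> x \<Longrightarrow> bump x = 0"
  by (auto simp: bump_def flat_exp_def)

lemma bump_pos: "0 < x \<Longrightarrow> x < 1 \<Longrightarrow> 0 < bump x"
  by (simp add: bump_def flat_exp_def)

lemma bump_on_nonneg: "0 \<le> bump_on p q x"
  by (simp add: bump_on_def bump_nonneg)

lemma bump_on_eq_0: "p < q \<Longrightarrow> x \<le> p \<or> q \<le> x \<Longrightarrow> bump_on p q x = 0"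
  unfolding bump_on_def by (rule bump_eq_0) (auto simp: field_simps)

lemma bump_on_pos: "p < q \<Longrightarrow> p < x \<Longrightarrow> x < q \<Longrightarrow> 0 < bump_on p q x"
  unfolding bump_on_def by (rule bump_pos) (auto simp: field_simps)

lemma integral_pos_if_continuous_nonneg:
  fixes f :: "real \<Rightarrow> real"
  assumes "p < q" "continuous_on {p..q} f" "\<And>x. x \<in> {p..q} \<Longrightarrow> 0 \<le> f x"
    and "x \<in> {p..q}" "0 < f x"
  shows "0 < integral {p..q} f"
proof -
  have "0 \<le> integral {p..q} f"
    using assms(2,3) by (intro integral_nonneg integrable_continuous_real) auto
  moreover have "integral {p..q} f \<noteq> 0"
  proof
    assume "integral {p..q} f = 0"
    then have "\<forall>y\<in>cbox p q. f y = 0"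
      using integral_cbox_eq_0_iff[of p q f] assms(1-3) by auto
    then show False using assms(4,5) by auto
  qed
  ultimately show ?thesis by simp
qed

lemma integral_bump_on_pos: "p < q \<Longrightarrow> 0 < integral {p..q} (bump_on p q)"
  by (rule integral_pos_if_continuous_nonneg[of _ _ _ "(p + q) / 2"])
     (auto intro: smooth_imp_continuous_on smooth_bump_on bump_on_nonneg bump_on_pos)

section \<open>Smooth steps and plateaus\<close>

definition step_density :: "real \<Rightarrow> real \<Rightarrow> real \<Rightarrow> real" where
  "step_density p q x = bump_on p q x / integral {p..q} (bump_on p q)"

text \<open>Any lower limit below \<open>p\<close> would do; \<open>p - 1\<close> keeps every \<open>x \<ge> p\<close> in the interior of the
  domain of integration.\<close>

definition smooth_step :: "real \<Rightarrow> real \<Rightarrow> real \<Rightarrow> real" where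
  "smooth_step p q x = integral {p - 1..x} (step_density p q)"

lemma smooth_step_density: "smooth (step_density p q)"
  using smooth_cmult[OF smooth_bump_on, of "inverse (integral {p..q} (bump_on p q))" p q]
  by (simp add: step_density_def[abs_def] divide_inverse mult.commute)

lemma continuous_on_step_density: "continuous_on S (step_density p q)"
  by (rule smooth_imp_continuous_on[OF smooth_step_density])

lemma step_density_nonneg: "p < q \<Longrightarrow> 0 \<le> step_density p q x"
  using integral_bump_on_pos[of p q] by (simp add: step_density_def bump_on_nonneg)

lemma step_density_eq_0: "p < q \<Longrightarrow> x \<le> p \<or> q \<le> x \<Longrightarrow> step_density p q x = 0"
  by (simp add: step_density_def bump_on_eq_0)

lemma integral_step_density: "p < q \<Longrightarrow> integral {p..q} (step_density p q) = 1"
  using integral_bump_on_pos[of p q]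
  by (simp add: step_density_def[abs_def] divide_inverse)

lemma integral_eq_0_if_vanishes:
  "(\<And>x. x \<in> {a..b} \<Longrightarrow> f x = 0) \<Longrightarrow> integral {a..b} f = (0 :: real)"
  using integral_cong[of "{a..b}" f "\<lambda>_. 0"] by simp

lemma smooth_step_eq_0: "p < q \<Longrightarrow> x \<le> p \<Longrightarrow> smooth_step p q x = 0"
  unfolding smooth_step_def by (rule integral_eq_0_if_vanishes) (simp add: step_density_eq_0)

lemma smooth_step_has_real_derivative:
  assumes "p < q" shows "(smooth_step p q has_real_derivative step_density p q x) (at x)"
proof (cases "x < p")
  case True
  have "((\<lambda>_. 0) has_real_derivative step_density p q x) (at x)"
    using True assms by (simp add: step_density_eq_0)
  then show ?thesis
    by (rule has_field_derivative_transform_within_open[where S="{..<p}"])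
       (use True assms in \<open>auto simp: smooth_step_eq_0\<close>)
next
  case False
  then have x: "x \<in> {p - 1<..<x + 1}" by auto
  have "(smooth_step p q has_real_derivative step_density p q x) (at x within {p - 1..x + 1})"
    unfolding smooth_step_def[abs_def]
    by (rule integral_has_real_derivative[OF continuous_on_step_density]) (use x in auto)
  then show ?thesis
    using at_within_interior[of x "{p - 1..x + 1}"] x by simp
qed

lemma smooth_smooth_step: "p < q \<Longrightarrow> smooth (smooth_step p q)"
  using smooth_antiderivative[OF smooth_step_density smooth_step_has_real_derivative] by blast

lemma smooth_step_mono:
  assumes "p < q" "x \<le> y" shows "smooth_step p q x \<le> smooth_step p q y"
  by (rule DERIV_nonneg_imp_nondecreasing[OF assms(2)])
     (use smooth_step_has_real_derivative step_density_nonneg assms(1) in blast)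

lemma smooth_step_eq_1:
  assumes "p < q" "q \<le> x" shows "smooth_step p q x = 1"
proof -
  have int: "step_density p q integrable_on {a..b}" for a b
    by (rule integrable_continuous_real[OF continuous_on_step_density])
  have vanish: "integral {p - 1..p} (step_density p q) = 0" "integral {q..x} (step_density p q) = 0"
    using assms by (auto intro!: integral_eq_0_if_vanishes step_density_eq_0)
  have "smooth_step p q x = integral {p - 1..p} (step_density p q) + integral {p..x} (step_density p q)"
    unfolding smooth_step_def using assms int
    by (intro Henstock_Kurzweil_Integration.integral_combine[symmetric]) auto
  also have "integral {p..x} (step_density p q)
      = integral {p..q} (step_density p q) + integral {q..x} (step_density p q)"
    using assms int by (intro Henstock_Kurzweil_Integration.integral_combine[symmetric]) auto
  finally show ?thesis
    unfolding vanish integral_step_density[OF assms(1)] by simp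
qed

lemma smooth_step_bounds: "p < q \<Longrightarrow> 0 \<le> smooth_step p q x \<and> smooth_step p q x \<le> 1"
  using smooth_step_mono[of p q "min x p" x] smooth_step_eq_0[of p q "min x p"]
    smooth_step_mono[of p q x "max x q"] smooth_step_eq_1[of p q "max x q"]
  by simp

definition plateau :: "real \<Rightarrow> real \<Rightarrow> real \<Rightarrow> real \<Rightarrow> real \<Rightarrow> real" where
  "plateau p q r s x = smooth_step p q x - smooth_step r s x"

context
  fixes p q r s :: real
  assumes pq: "p < q" and qr: "q \<le> r" and rs: "r < s"
begin

lemma plateau_has_real_derivative:
  "(plateau p q r s has_real_derivative step_density p q x - step_density r s x) (at x)"
  unfolding plateau_def[abs_def]
  using pq rs by (intro DERIV_diff smooth_step_has_real_derivative)

lemma deriv_plateau: "deriv (plateau p q r s) x = step_density p q x - step_density r s x"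
  by (rule DERIV_imp_deriv[OF plateau_has_real_derivative])

lemma plateau_eq_0: "x \<le> p \<or> s \<le> x \<Longrightarrow> plateau p q r s x = 0"
  using pq qr rs by (auto simp: plateau_def smooth_step_eq_0 smooth_step_eq_1)

lemma plateau_eq_1: "q \<le> x \<Longrightarrow> x \<le> r \<Longrightarrow> plateau p q r s x = 1"
  using pq qr rs by (auto simp: plateau_def smooth_step_eq_0 smooth_step_eq_1)

lemma plateau_bounds: "0 \<le> plateau p q r s x \<and> plateau p q r s x \<le> 1"
  using pq qr rs smooth_step_bounds[of p q x] smooth_step_bounds[of r s x]
  by (cases "x \<le> r") (auto simp: plateau_def smooth_step_eq_0 smooth_step_eq_1)

lemma continuous_on_plateau: "continuous_on S (plateau p q r s)"
  using plateau_has_real_derivative by (meson DERIV_isCont continuous_at_imp_continuous_on)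

lemma test_fun_plateau: "0 < p \<Longrightarrow> s < 1 \<Longrightarrow> test_fun (plateau p q r s)"
  unfolding test_fun_iff_smooth plateau_def[abs_def]
  using pq qr rs plateau_eq_0[unfolded plateau_def]
  by (intro conjI smooth_diff smooth_smooth_step exI[of _ p] exI[of _ s]) auto

end

lemma set_integrable_01_if_continuous:
  fixes f :: "real \<Rightarrow> real"
  assumes "continuous_on {0..1} f" shows "set_integrable lborel {0<..<1} f"
  by (rule set_integrable_subset[OF borel_integrable_atLeastAtMost'[OF assms]]) auto

lemma set_lebesgue_integral_01_eq_integral:
  fixes f :: "real \<Rightarrow> real"
  assumes "continuous_on {0..1} f" shows "(LINT x:{0<..<1}|lborel. f x) = integral {0..1} f"
  using set_borel_integral_eq_integral(2)[OF set_integrable_01_if_continuous[OF assms]]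
    integral_open_interval_real[of 0 1 f]
  by simp

lemma L2_01_if_continuous:
  assumes "continuous_on {0..1} f" shows "L2_01 f"
proof -
  have "set_borel_measurable lborel {0<..<1} f"
    using set_integrable_01_if_continuous[OF assms]
    unfolding set_integrable_def set_borel_measurable_def by (rule borel_measurable_integrable)
  moreover have "set_integrable lborel {0<..<1} (\<lambda>x. (f x)\<^sup>2)"
    by (intro set_integrable_01_if_continuous continuous_intros assms)
  ultimately show ?thesis unfolding L2_01_def ..
qed

lemma L2_01_imp_set_integrable:
  assumes "L2_01 g" shows "set_integrable lborel {0<..<1} g"
proof (rule set_integrable_bound)
  have "set_integrable lborel {0<..<1} (\<lambda>x. 1 + (g x)\<^sup>2)"
    using assms set_integrable_01_if_continuous[of "\<lambda>_. 1"] unfolding L2_01_def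
    by (intro set_integral_add(1)) auto
  then show "set_integrable lborel {0<..<1} (\<lambda>x. 1 + (g x)\<^sup>2)" .
  show "set_borel_measurable lborel {0<..<1} g"
    using assms unfolding L2_01_def by blast
  have "\<bar>y\<bar> \<le> 1 + y\<^sup>2" for y :: real
    using zero_le_power2[of "\<bar>y\<bar> - 1"] by (simp add: power2_eq_square algebra_simps)
  then show "AE x in lborel. x \<in> {0<..<1} \<longrightarrow> norm (g x) \<le> norm (1 + (g x)\<^sup>2)"
    by simp
qed

lemma set_integrable_01_mult_continuous:
  fixes g h :: "real \<Rightarrow> real"
  assumes g: "set_integrable lborel {0<..<1} g" and h: "continuous_on {0..1} h"
  shows "set_integrable lborel {0<..<1} (\<lambda>x. g x * h x)"
proof -
  obtain B where "\<forall>y\<in>h ` {0..1}. norm y \<le> B"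
    using compact_imp_bounded[OF compact_continuous_image[OF h compact_Icc]]
    unfolding bounded_iff by blast
  then have B: "\<And>x. x \<in> {0..1} \<Longrightarrow> norm (h x) \<le> B" by blast
  show ?thesis
  proof (rule set_integrable_bound)
    show "set_integrable lborel {0<..<1} (\<lambda>x. B * g x)"
      using g by (rule set_integrable_mult_right)
    have "(\<lambda>x. indicator {0<..<1} x *\<^sub>R h x) \<in> borel_measurable borel"
      by (rule borel_measurable_continuous_on_indicator) (auto intro: continuous_on_subset[OF h])
    then have "(\<lambda>x. indicator {0<..<1} x *\<^sub>R h x) \<in> borel_measurable lborel"
      by simp
    moreover have "(\<lambda>x. indicator {0<..<1} x *\<^sub>R g x) \<in> borel_measurable lborel"
      using g unfolding set_integrable_def by (rule borel_measurable_integrable)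
    ultimately have "(\<lambda>x. (indicator {0<..<1} x *\<^sub>R g x) * (indicator {0<..<1} x *\<^sub>R h x))
        \<in> borel_measurable lborel"
      by (intro borel_measurable_times)
    moreover have "(\<lambda>x. (indicator {0<..<1} x *\<^sub>R g x) * (indicator {0<..<1} x *\<^sub>R h x))
        = (\<lambda>x. indicator {0<..<1} x *\<^sub>R (g x * h x))"
      by (simp add: fun_eq_iff indicator_def)
    ultimately show "set_borel_measurable lborel {0<..<1} (\<lambda>x. g x * h x)"
      unfolding set_borel_measurable_def by simp
    show "AE x in lborel. x \<in> {0<..<1} \<longrightarrow> norm (g x * h x) \<le> norm (B * g x)"
    proof (intro AE_I2 impI)
      fix x :: real assume "x \<in> {0<..<1}"
      then have "\<bar>h x\<bar> \<le> \<bar>B\<bar>" using B[of x] by auto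
      then show "norm (g x * h x) \<le> norm (B * g x)"
        by (simp add: abs_mult mult.commute[of "\<bar>B\<bar>"] mult_left_mono)
    qed
  qed
qed

lemma integration_by_parts_vanishing_boundary:
  fixes u v u' v' :: "real \<Rightarrow> real"
  assumes "a \<le> b"
    and du: "\<And>x. x \<in> {a..b} \<Longrightarrow> (u has_real_derivative u' x) (at x within {a..b})"
    and dv: "\<And>x. x \<in> {a..b} \<Longrightarrow> (v has_real_derivative v' x) (at x within {a..b})"
    and "continuous_on {a..b} u'" "continuous_on {a..b} v'"
    and "u a * v a = 0" "u b * v b = 0"
  shows "integral {a..b} (\<lambda>x. u x * v' x) = - integral {a..b} (\<lambda>x. u' x * v x)"
proof -
  have "continuous_on {a..b} u" "continuous_on {a..b} v"
    using DERIV_continuous_on du dv by blast+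
  then have int: "(\<lambda>x. u x * v' x) integrable_on {a..b}" "(\<lambda>x. u' x * v x) integrable_on {a..b}"
    using assms(4,5) by (auto intro!: integrable_continuous_real continuous_intros)
  have "((\<lambda>x. u x * v' x + u' x * v x) has_integral (u b * v b - u a * v a)) {a..b}"
    using DERIV_mult'[OF du dv] \<open>a \<le> b\<close>
    by (intro fundamental_theorem_of_calculus) (auto simp: has_real_derivative_iff_has_vector_derivative[symmetric] algebra_simps)
  then have "integral {a..b} (\<lambda>x. u x * v' x + u' x * v x) = 0"
    using assms(6,7) by (simp add: integral_unique)
  then show ?thesis
    using integral_add[OF int] by simp
qed

lemma test_fun_has_real_derivative:
  assumes "test_fun \<psi>" shows "(\<psi> has_real_derivative deriv \<psi> x) (at x)"
proof -
  obtain \<psi>' where "\<And>x. (\<psi> has_real_derivative \<psi>' x) (at x)"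
    using assms unfolding test_fun_iff_smooth by (metis smooth_has_real_derivative)
  then show ?thesis using DERIV_imp_deriv by metis
qed

lemma test_fun_continuous_on: "test_fun \<psi> \<Longrightarrow> continuous_on S \<psi>"
  unfolding test_fun_iff_smooth by (simp add: smooth_imp_continuous_on)

lemma test_fun_eq_0:
  assumes "test_fun \<psi>" "x \<le> 0 \<or> 1 \<le> x" shows "\<psi> x = 0"
proof -
  obtain a b where "0 < a" "b < 1" "\<forall>x. x \<notin> {a..b} \<longrightarrow> \<psi> x = 0"
    using assms(1) unfolding test_fun_def by blast
  with assms(2) show ?thesis by auto
qed

lemma test_fun_deriv:
  assumes "test_fun \<psi>" shows "test_fun (deriv \<psi>)"
proof -
  obtain D where D: "D 0 = \<psi>" "\<And>k x. (D k has_real_derivative D (Suc k) x) (at x)"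
    using assms unfolding test_fun_def by blast
  obtain a b where ab: "0 < a" "a \<le> b" "b < 1" "\<And>x. x \<notin> {a..b} \<Longrightarrow> \<psi> x = 0"
    using assms unfolding test_fun_def by blast
  have deriv: "deriv \<psi> = D 1"
    using D by (intro ext DERIV_imp_deriv) (metis One_nat_def)
  have "deriv \<psi> x = 0" if "x \<notin> {a..b}" for x
  proof -
    have "(\<psi> has_real_derivative 0) (at x)"
      by (rule has_field_derivative_transform_within_open[where f="\<lambda>_. 0" and S="- {a..b}"])
         (use that ab(4) in auto)
    then show ?thesis by (rule DERIV_imp_deriv)
  qed
  then show ?thesis
    unfolding test_fun_def deriv using D(2) ab(1-3)
    by (intro conjI exI[of _ "\<lambda>k. D (Suc k)"] exI[of _ a] exI[of _ b]) auto
qed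

lemma test_fun_integration_by_parts:
  fixes u u' :: "real \<Rightarrow> real"
  assumes "\<And>x. x \<in> {0..1} \<Longrightarrow> (u has_real_derivative u' x) (at x within {0..1})"
    and "continuous_on {0..1} u'" and \<theta>: "test_fun \<theta>"
  shows "integral {0..1} (\<lambda>x. u x * deriv \<theta> x) = - integral {0..1} (\<lambda>x. u' x * \<theta> x)"
proof (rule integration_by_parts_vanishing_boundary)
  show "(\<theta> has_real_derivative deriv \<theta> x) (at x within {0..1})" for x
    using test_fun_has_real_derivative[OF \<theta>] by (rule has_field_derivative_at_within)
  show "continuous_on {0..1} (deriv \<theta>)"
    by (rule test_fun_continuous_on[OF test_fun_deriv[OF \<theta>]])
  show "u 0 * \<theta> 0 = 0" "u 1 * \<theta> 1 = 0"
    using test_fun_eq_0[OF \<theta>] by auto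
qed (use assms in auto)

lemma test_fun_W12_0_deriv:
  assumes \<psi>: "test_fun \<psi>" shows "W12_0_deriv \<psi> (deriv \<psi>)"
proof -
  have cont: "continuous_on {0..1} \<psi>" "continuous_on {0..1} (deriv \<psi>)"
    using \<psi> by (auto intro: test_fun_continuous_on test_fun_deriv)
  have "(LINT x:{0<..<1}|lborel. \<psi> x * deriv \<theta> x) = - (LINT x:{0<..<1}|lborel. deriv \<psi> x * \<theta> x)"
    if \<theta>: "test_fun \<theta>" for \<theta>
  proof -
    have cont\<theta>: "continuous_on {0..1} \<theta>" "continuous_on {0..1} (deriv \<theta>)"
      using \<theta> by (auto intro: test_fun_continuous_on test_fun_deriv)
    have "(\<psi> has_real_derivative deriv \<psi> x) (at x within {0..1})" for x
      using test_fun_has_real_derivative[OF \<psi>] by (rule has_field_derivative_at_within)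
    then have "integral {0..1} (\<lambda>x. \<psi> x * deriv \<theta> x) = - integral {0..1} (\<lambda>x. deriv \<psi> x * \<theta> x)"
      by (rule test_fun_integration_by_parts[OF _ cont(2) \<theta>])
    moreover have "(LINT x:{0<..<1}|lborel. \<psi> x * deriv \<theta> x) = integral {0..1} (\<lambda>x. \<psi> x * deriv \<theta> x)"
      by (intro set_lebesgue_integral_01_eq_integral continuous_on_mult cont cont\<theta>)
    moreover have "(LINT x:{0<..<1}|lborel. deriv \<psi> x * \<theta> x) = integral {0..1} (\<lambda>x. deriv \<psi> x * \<theta> x)"
      by (intro set_lebesgue_integral_01_eq_integral continuous_on_mult cont cont\<theta>)
    ultimately show ?thesis by simp
  qed
  then have "W12_deriv \<psi> (deriv \<psi>)"
    unfolding W12_deriv_def using cont by (blast intro: L2_01_if_continuous)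
  then show ?thesis
    unfolding W12_0_deriv_def using test_fun_deriv[OF \<psi>] \<psi> by (intro conjI exI[of _ "\<lambda>_. \<psi>"]) simp_all
qed

section \<open>The fundamental lemma of the calculus of variations\<close>

lemma plateau_tendsto_indicator:
  fixes \<delta> :: "nat \<Rightarrow> real"
  assumes \<delta>: "\<delta> \<longlonglongrightarrow> 0" "\<And>n. 0 < \<delta> n" "\<And>n. 2 * \<delta> n \<le> t - s"
  shows "(\<lambda>n. plateau (s + \<delta> n / 2) (s + \<delta> n) (t - \<delta> n) (t - \<delta> n / 2) x) \<longlonglongrightarrow> indicator {s<..<t} x"
proof (cases "s < x \<and> x < t")
  case True
  then have "\<forall>\<^sub>F n in sequentially. \<delta> n < min (x - s) (t - x)"
    by (intro order_tendstoD(2)[OF \<delta>(1)]) simp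
  then have "\<forall>\<^sub>F n in sequentially. plateau (s + \<delta> n / 2) (s + \<delta> n) (t - \<delta> n) (t - \<delta> n / 2) x = 1"
  proof eventually_elim
    case (elim n)
    show ?case
      using \<delta>(2)[of n] \<delta>(3)[of n] elim by (intro plateau_eq_1) auto
  qed
  then show ?thesis
    using True by (simp add: tendsto_eventually)
next
  case False
  have "plateau (s + \<delta> n / 2) (s + \<delta> n) (t - \<delta> n) (t - \<delta> n / 2) x = 0" for n
    using \<delta>(2)[of n] \<delta>(3)[of n] False by (intro plateau_eq_0) auto
  then show ?thesis
    using False by simp
qed

lemma integral_mult_indicator_eq_0_if_orthogonal_test_funs:
  fixes F :: "real \<Rightarrow> real"
  assumes F: "integrable lborel F"
    and orth: "\<And>\<psi>. test_fun \<psi> \<Longrightarrow> (\<integral>x. F x * \<psi> x \<partial>lborel) = 0"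
    and st: "0 \<le> s" "s < t" "t \<le> 1"
  shows "(\<integral>x. F x * indicator {s<..<t} x \<partial>lborel) = 0"
proof -
  define \<delta> where "\<delta> n = (t - s) / 4 * inverse (real (Suc n))" for n
  define \<psi> where "\<psi> n = plateau (s + \<delta> n / 2) (s + \<delta> n) (t - \<delta> n) (t - \<delta> n / 2)" for n
  have \<delta>: "\<delta> \<longlonglongrightarrow> 0" "0 < \<delta> n" "2 * \<delta> n \<le> t - s" for n
  proof -
    show "\<delta> \<longlonglongrightarrow> 0"
      unfolding \<delta>_def by (rule tendsto_mult_right_zero[OF LIMSEQ_inverse_real_of_nat])
    show "0 < \<delta> n"
      using st by (simp add: \<delta>_def)
    have "\<delta> n \<le> (t - s) / 4"
      unfolding \<delta>_def using st by (intro mult_left_le) (auto simp: inverse_le_1_iff)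
    then show "2 * \<delta> n \<le> t - s"
      using st by simp
  qed
  have order: "s + \<delta> n / 2 < s + \<delta> n" "s + \<delta> n \<le> t - \<delta> n" "t - \<delta> n < t - \<delta> n / 2" for n
    using \<delta>(2)[of n] \<delta>(3)[of n] by auto
  have [measurable]: "F \<in> borel_measurable lborel" "\<psi> n \<in> borel_measurable lborel" for n
    using borel_measurable_integrable[OF F]
      borel_measurable_continuous_onI[OF continuous_on_plateau[OF order(1-3)]]
    by (simp_all add: \<psi>_def)
  have "(\<lambda>n. \<integral>x. F x * \<psi> n x \<partial>lborel) \<longlonglongrightarrow> (\<integral>x. F x * indicator {s<..<t} x \<partial>lborel)"
  proof (rule integral_dominated_convergence[where w="\<lambda>x. norm (F x)"])
    show "AE x in lborel. (\<lambda>n. F x * \<psi> n x) \<longlonglongrightarrow> F x * indicator {s<..<t} x"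
      unfolding \<psi>_def using plateau_tendsto_indicator[OF \<delta>] by (intro AE_I2 tendsto_mult_left)
    show "AE x in lborel. norm (F x * \<psi> n x) \<le> norm (F x)" for n
      using plateau_bounds[OF order(1-3)] unfolding \<psi>_def
      by (auto simp: abs_mult intro!: mult_left_le)
  qed (use F in auto)
  moreover have "(\<integral>x. F x * \<psi> n x \<partial>lborel) = 0" for n
    using order(1-3)[of n] \<delta>(2)[of n] st unfolding \<psi>_def by (intro orth test_fun_plateau) auto
  ultimately show ?thesis
    by (simp add: LIMSEQ_const_iff)
qed

text \<open>The positive and negative parts of \<open>F\<close> are densities of two measures that agree on all
  half-lines, hence coincide.\<close>

lemma AE_eq_0_if_integral_greaterThan_eq_0:
  fixes F :: "real \<Rightarrow> real"
  assumes F: "integrable lborel F" and zero: "\<And>a. (\<integral>x. F x * indicator {a<..} x \<partial>lborel) = 0"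
  shows "AE x in lborel. F x = 0"
proof -
  define Fp where "Fp x = max 0 (F x)" for x
  define Fn where "Fn x = max 0 (- F x)" for x
  have nonneg: "0 \<le> Fp x" "0 \<le> Fn x" for x by (simp_all add: Fp_def Fn_def)
  have F_eq: "F x = Fp x - Fn x" for x by (simp add: Fp_def Fn_def)
  have [measurable]: "F \<in> borel_measurable lborel" by (rule borel_measurable_integrable[OF F])
  have "integrable lborel Fp" "integrable lborel Fn"
    using F unfolding Fp_def Fn_def by auto
  then have int: "integrable lborel (\<lambda>x. indicator {a<..} x *\<^sub>R Fp x)"
    "integrable lborel (\<lambda>x. indicator {a<..} x *\<^sub>R Fn x)" for a
    by (intro integrable_mult_indicator; simp)+
  have eq: "(\<integral>x. indicator {a<..} x *\<^sub>R Fp x \<partial>lborel) = (\<integral>x. indicator {a<..} x *\<^sub>R Fn x \<partial>lborel)"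
    for a
  proof -
    have "(\<integral>x. indicator {a<..} x *\<^sub>R Fp x - indicator {a<..} x *\<^sub>R Fn x \<partial>lborel) = 0"
      using zero[of a] by (simp add: F_eq algebra_simps indicator_def)
    then show ?thesis using Bochner_Integration.integral_diff[OF int] by simp
  qed
  have emeasure: "emeasure (density lborel (\<lambda>x. ennreal (G x))) {a<..} = ennreal (\<integral>x. indicator {a<..} x *\<^sub>R G x \<partial>lborel)"
    if "integrable lborel (\<lambda>x. indicator {a<..} x *\<^sub>R G x)" "\<And>x. 0 \<le> G x" "G \<in> borel_measurable lborel"
    for G :: "real \<Rightarrow> real" and a
  proof -
    have "emeasure (density lborel (\<lambda>x. ennreal (G x))) {a<..} = (\<integral>\<^sup>+ x. ennreal (indicator {a<..} x *\<^sub>R G x) \<partial>lborel)"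
      using that(3) by (subst emeasure_density) (auto intro!: nn_integral_cong simp: indicator_def)
    also have "\<dots> = ennreal (\<integral>x. indicator {a<..} x *\<^sub>R G x \<partial>lborel)"
      using that by (intro nn_integral_eq_integral) auto
    finally show ?thesis .
  qed
  have [measurable]: "Fp \<in> borel_measurable lborel" "Fn \<in> borel_measurable lborel"
    unfolding Fp_def Fn_def by measurable
  have "density lborel (\<lambda>x. ennreal (Fp x)) = density lborel (\<lambda>x. ennreal (Fn x))"
    by (rule measure_eqI_lessThan) (use emeasure[where G=Fp] emeasure[where G=Fn] int eq nonneg in simp_all)
  then have "AE x in lborel. ennreal (Fp x) = ennreal (Fn x)"
    by (intro sigma_finite_measure.density_unique[OF sigma_finite_lborel]) simp_all
  then show ?thesis
    by eventually_elim (use nonneg in \<open>simp add: F_eq\<close>)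
qed

lemma AE_eq_0_if_orthogonal_test_funs:
  fixes F :: "real \<Rightarrow> real"
  assumes F: "integrable lborel F"
    and orth: "\<And>\<psi>. test_fun \<psi> \<Longrightarrow> (\<integral>x. F x * \<psi> x \<partial>lborel) = 0"
    and supp: "\<And>x. x \<notin> {0<..<1} \<Longrightarrow> F x = 0"
  shows "AE x in lborel. F x = 0"
proof (rule AE_eq_0_if_integral_greaterThan_eq_0[OF F])
  fix a :: real
  show "(\<integral>x. F x * indicator {a<..} x \<partial>lborel) = 0"
  proof (cases "a < 1")
    case True
    have "(\<lambda>x. F x * indicator {a<..} x) = (\<lambda>x. F x * indicator {max a 0<..<1} x)"
      using supp by (auto simp: fun_eq_iff indicator_def)
    then show ?thesis
      using integral_mult_indicator_eq_0_if_orthogonal_test_funs[OF F orth, of "max a 0" 1] True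
      by simp
  next
    case False
    then have "(\<lambda>x. F x * indicator {a<..} x) = (\<lambda>x. 0)"
      using supp by (auto simp: fun_eq_iff indicator_def)
    then show ?thesis by simp
  qed
qed

section \<open>Weak solutions of class \<open>C\<^sup>1\<close>\<close>

lemma W12_deriv_set_integral_mult_test_fun:
  fixes \<rho> g D :: "real \<Rightarrow> real"
  assumes W: "W12_deriv \<rho> g"
    and dD: "\<And>x. x \<in> {0..1} \<Longrightarrow> (\<rho> has_real_derivative D x) (at x within {0..1})"
    and cD: "continuous_on {0..1} D" and \<psi>: "test_fun \<psi>"
  shows "(LINT x:{0<..<1}|lborel. g x * \<psi> x) = (LINT x:{0<..<1}|lborel. D x * \<psi> x)"
proof -
  have c\<rho>: "continuous_on {0..1} \<rho>"
    using dD by (rule DERIV_continuous_on)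
  have c\<psi>: "continuous_on {0..1} \<psi>" "continuous_on {0..1} (deriv \<psi>)"
    using \<psi> by (auto intro: test_fun_continuous_on test_fun_deriv)
  have "(LINT x:{0<..<1}|lborel. g x * \<psi> x) = - (LINT x:{0<..<1}|lborel. \<rho> x * deriv \<psi> x)"
    using W \<psi> unfolding W12_deriv_def by simp
  also have "(LINT x:{0<..<1}|lborel. \<rho> x * deriv \<psi> x) = integral {0..1} (\<lambda>x. \<rho> x * deriv \<psi> x)"
    by (intro set_lebesgue_integral_01_eq_integral continuous_on_mult c\<rho> c\<psi>)
  also have "\<dots> = - integral {0..1} (\<lambda>x. D x * \<psi> x)"
    by (rule test_fun_integration_by_parts[OF dD cD \<psi>])
  also have "integral {0..1} (\<lambda>x. D x * \<psi> x) = (LINT x:{0<..<1}|lborel. D x * \<psi> x)"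
    by (intro set_lebesgue_integral_01_eq_integral[symmetric] continuous_on_mult cD c\<psi>)
  finally show ?thesis by simp
qed

lemma W12_deriv_AE_eq_deriv:
  fixes \<rho> g D :: "real \<Rightarrow> real"
  assumes W: "W12_deriv \<rho> g"
    and dD: "\<And>x. x \<in> {0..1} \<Longrightarrow> (\<rho> has_real_derivative D x) (at x within {0..1})"
    and cD: "continuous_on {0..1} D"
  shows "AE x in lborel. x \<in> {0<..<1} \<longrightarrow> g x = D x"
proof -
  let ?S = "{0<..<1::real}"
  define F where "F x = indicator ?S x *\<^sub>R g x - indicator ?S x *\<^sub>R D x" for x
  have g: "set_integrable lborel ?S g"
    using W unfolding W12_deriv_def by (blast intro: L2_01_imp_set_integrable)
  have D: "set_integrable lborel ?S D"
    by (rule set_integrable_01_if_continuous[OF cD])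
  have "integrable lborel F"
    unfolding F_def using g D unfolding set_integrable_def by (rule Bochner_Integration.integrable_diff)
  moreover have "(\<integral>x. F x * \<psi> x \<partial>lborel) = 0" if \<psi>: "test_fun \<psi>" for \<psi>
  proof -
    have c\<psi>: "continuous_on {0..1} \<psi>"
      using \<psi> by (rule test_fun_continuous_on)
    have "(\<integral>x. F x * \<psi> x \<partial>lborel)
        = (\<integral>x. indicator ?S x *\<^sub>R (g x * \<psi> x) - indicator ?S x *\<^sub>R (D x * \<psi> x) \<partial>lborel)"
      by (rule Bochner_Integration.integral_cong) (auto simp: F_def algebra_simps)
    also have "\<dots> = (LINT x:?S|lborel. g x * \<psi> x) - (LINT x:?S|lborel. D x * \<psi> x)"
      using set_integrable_01_mult_continuous[OF g c\<psi>] set_integrable_01_mult_continuous[OF D c\<psi>]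
      unfolding set_integrable_def set_lebesgue_integral_def
      by (rule Bochner_Integration.integral_diff)
    finally show ?thesis
      using W12_deriv_set_integral_mult_test_fun[OF W dD cD \<psi>] by simp
  qed
  moreover have "F x = 0" if "x \<notin> ?S" for x
    using that by (simp add: F_def)
  ultimately have "AE x in lborel. F x = 0"
    by (rule AE_eq_0_if_orthogonal_test_funs)
  then show ?thesis
    by eventually_elim (simp add: F_def indicator_def)
qed

lemma set_lebesgue_integral_01_cong_AE:
  fixes g D h k :: "real \<Rightarrow> real"
  assumes g: "set_borel_measurable lborel {0<..<1} g"
    and cont: "continuous_on {0..1} D" "continuous_on {0..1} h" "continuous_on {0..1} k"
    and eq: "AE x in lborel. x \<in> {0<..<1} \<longrightarrow> g x = D x"
  shows "(LINT x:{0<..<1}|lborel. g x * h x + k x) = (LINT x:{0<..<1}|lborel. D x * h x + k x)"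
  unfolding set_lebesgue_integral_def
proof (rule integral_cong_AE)
  let ?S = "{0<..<1::real}"
  have meas: "(\<lambda>x. indicator ?S x *\<^sub>R f x) \<in> borel_measurable lborel"
    if "continuous_on {0..1} f" for f :: "real \<Rightarrow> real"
  proof -
    have "(\<lambda>x. indicator ?S x *\<^sub>R f x) \<in> borel_measurable borel"
      by (rule borel_measurable_continuous_on_indicator) (auto intro: continuous_on_subset[OF that])
    then show ?thesis by simp
  qed
  have split: "(\<lambda>x. indicator ?S x *\<^sub>R (f x * h x + k x))
      = (\<lambda>x. (indicator ?S x *\<^sub>R f x) * (indicator ?S x *\<^sub>R h x) + indicator ?S x *\<^sub>R k x)"
    for f :: "real \<Rightarrow> real"
    by (simp add: fun_eq_iff indicator_def)
  show "(\<lambda>x. indicator ?S x *\<^sub>R (g x * h x + k x)) \<in> borel_measurable lborel"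
    unfolding split using g meas[OF cont(2)] meas[OF cont(3)]
    unfolding set_borel_measurable_def by (intro borel_measurable_add borel_measurable_times)
  show "(\<lambda>x. indicator ?S x *\<^sub>R (D x * h x + k x)) \<in> borel_measurable lborel"
    unfolding split using meas[OF cont(1)] meas[OF cont(2)] meas[OF cont(3)]
    by (intro borel_measurable_add borel_measurable_times)
  show "AE x in lborel. indicator ?S x *\<^sub>R (g x * h x + k x) = indicator ?S x *\<^sub>R (D x * h x + k x)"
    using eq by eventually_elim (simp add: indicator_def)
qed

lemma C1_weak_solution_identity:
  fixes \<rho> D :: "real \<Rightarrow> real"
  assumes ws: "weak_solution_S \<epsilon> \<Omega>A \<Omega>D \<alpha> \<beta> \<rho>"
    and dD: "\<And>x. x \<in> {0..1} \<Longrightarrow> (\<rho> has_real_derivative D x) (at x within {0..1})"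
    and cD: "continuous_on {0..1} D" and \<psi>: "test_fun \<psi>"
  shows "integral {0..1} (\<lambda>x. \<epsilon> / 2 * D x * deriv \<psi> x
           - ((2 * \<rho> x - 1) * D x + \<Omega>A * (1 - \<rho> x) - \<Omega>D * \<rho> x) * \<psi> x) = 0"
proof -
  obtain g where W: "W12_deriv \<rho> g" and E: "\<forall>\<phi> h. W12_0_deriv \<phi> h \<longrightarrow>
      (LINT x:{0<..<1}|lborel. \<epsilon> / 2 * g x * h x
         - ((2 * \<rho> x - 1) * g x + \<Omega>A * (1 - \<rho> x) - \<Omega>D * \<rho> x) * \<phi> x) = 0"
    using ws unfolding weak_solution_S_def by blast
  have c\<rho>: "continuous_on {0..1} \<rho>"
    using dD by (rule DERIV_continuous_on)
  have c\<psi>: "continuous_on {0..1} \<psi>" "continuous_on {0..1} (deriv \<psi>)"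
    using \<psi> by (auto intro: test_fun_continuous_on test_fun_deriv)
  define H where "H x = \<epsilon> / 2 * deriv \<psi> x - (2 * \<rho> x - 1) * \<psi> x" for x
  define K where "K x = - ((\<Omega>A * (1 - \<rho> x) - \<Omega>D * \<rho> x) * \<psi> x)" for x
  have cHK: "continuous_on {0..1} H" "continuous_on {0..1} K"
    unfolding H_def K_def by (intro continuous_intros c\<rho> c\<psi>)+
  have integrand: "\<epsilon> / 2 * f x * deriv \<psi> x - ((2 * \<rho> x - 1) * f x + \<Omega>A * (1 - \<rho> x) - \<Omega>D * \<rho> x) * \<psi> x
      = f x * H x + K x" for f :: "real \<Rightarrow> real" and x
    by (simp add: H_def K_def algebra_simps)
  have "(LINT x:{0<..<1}|lborel. \<epsilon> / 2 * g x * deriv \<psi> x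
      - ((2 * \<rho> x - 1) * g x + \<Omega>A * (1 - \<rho> x) - \<Omega>D * \<rho> x) * \<psi> x) = 0"
    using E test_fun_W12_0_deriv[OF \<psi>] by blast
  then have "0 = (LINT x:{0<..<1}|lborel. g x * H x + K x)"
    by (simp only: integrand)
  also have "\<dots> = (LINT x:{0<..<1}|lborel. D x * H x + K x)"
    using W unfolding W12_deriv_def L2_01_def
    by (intro set_lebesgue_integral_01_cong_AE cD cHK W12_deriv_AE_eq_deriv[OF W dD cD]) blast
  also have "\<dots> = integral {0..1} (\<lambda>x. D x * H x + K x)"
    by (intro set_lebesgue_integral_01_eq_integral continuous_intros cD cHK)
  finally show ?thesis
    unfolding integrand by simp
qed

text \<open>Since \<open>(2\<rho> - 1) \<rho>' = (\<rho>\<^sup>2 - \<rho>)'\<close>, the difference of the convection terms of two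
  solutions integrates by parts to \<open>(\<rho>\<^sub>1 + \<rho>\<^sub>2 - 1)(\<rho>\<^sub>1 - \<rho>\<^sub>2) \<psi>'\<close>.\<close>

lemma C1_weak_solutions_difference_identity:
  fixes \<rho>1 \<rho>2 D1 D2 :: "real \<Rightarrow> real"
  assumes dD1: "\<And>x. x \<in> {0..1} \<Longrightarrow> (\<rho>1 has_real_derivative D1 x) (at x within {0..1})"
    and dD2: "\<And>x. x \<in> {0..1} \<Longrightarrow> (\<rho>2 has_real_derivative D2 x) (at x within {0..1})"
    and cD: "continuous_on {0..1} D1" "continuous_on {0..1} D2"
    and E1: "integral {0..1} (\<lambda>x. \<epsilon> / 2 * D1 x * deriv \<psi> x
              - ((2 * \<rho>1 x - 1) * D1 x + \<Omega>A * (1 - \<rho>1 x) - \<Omega>D * \<rho>1 x) * \<psi> x) = 0"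
    and E2: "integral {0..1} (\<lambda>x. \<epsilon> / 2 * D2 x * deriv \<psi> x
              - ((2 * \<rho>2 x - 1) * D2 x + \<Omega>A * (1 - \<rho>2 x) - \<Omega>D * \<rho>2 x) * \<psi> x) = 0"
    and \<psi>: "test_fun \<psi>"
  shows "integral {0..1} (\<lambda>x. (\<epsilon> / 2 * (D1 x - D2 x) + (\<rho>1 x + \<rho>2 x - 1) * (\<rho>1 x - \<rho>2 x)) * deriv \<psi> x
            + (\<Omega>A + \<Omega>D) * (\<rho>1 x - \<rho>2 x) * \<psi> x) = 0"
proof -
  have c\<rho>: "continuous_on {0..1} \<rho>1" "continuous_on {0..1} \<rho>2"
    using DERIV_continuous_on dD1 dD2 by blast+
  have c\<psi>: "continuous_on {0..1} \<psi>" "continuous_on {0..1} (deriv \<psi>)"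
    using \<psi> by (auto intro: test_fun_continuous_on test_fun_deriv)
  let ?A1 = "\<lambda>x. \<epsilon> / 2 * D1 x * deriv \<psi> x - ((2 * \<rho>1 x - 1) * D1 x + \<Omega>A * (1 - \<rho>1 x) - \<Omega>D * \<rho>1 x) * \<psi> x"
  let ?A2 = "\<lambda>x. \<epsilon> / 2 * D2 x * deriv \<psi> x - ((2 * \<rho>2 x - 1) * D2 x + \<Omega>A * (1 - \<rho>2 x) - \<Omega>D * \<rho>2 x) * \<psi> x"
  let ?u = "\<lambda>x. (\<rho>1 x + \<rho>2 x - 1) * (\<rho>1 x - \<rho>2 x)"
  let ?u' = "\<lambda>x. (D1 x + D2 x) * (\<rho>1 x - \<rho>2 x) + (\<rho>1 x + \<rho>2 x - 1) * (D1 x - D2 x)"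
  have du: "(?u has_real_derivative ?u' x) (at x within {0..1})" if "x \<in> {0..1}" for x
    using dD1[OF that] dD2[OF that] by (auto intro!: derivative_eq_intros)
  have cu': "continuous_on {0..1} ?u'"
    by (intro continuous_intros cD c\<rho>)
  have parts: "integral {0..1} (\<lambda>x. ?u x * deriv \<psi> x) = - integral {0..1} (\<lambda>x. ?u' x * \<psi> x)"
    by (rule test_fun_integration_by_parts[OF du cu' \<psi>])
  have int: "?A1 integrable_on {0..1}" "?A2 integrable_on {0..1}"
    "(\<lambda>x. ?u x * deriv \<psi> x) integrable_on {0..1}" "(\<lambda>x. ?u' x * \<psi> x) integrable_on {0..1}"
    by (intro integrable_continuous_real continuous_intros cD c\<rho> c\<psi>)+
  have "integral {0..1} (\<lambda>x. (?A1 x - ?A2 x) + ?u x * deriv \<psi> x + ?u' x * \<psi> x) =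
      integral {0..1} ?A1 - integral {0..1} ?A2 + integral {0..1} (\<lambda>x. ?u x * deriv \<psi> x)
      + integral {0..1} (\<lambda>x. ?u' x * \<psi> x)"
    using int by (simp add: integral_add integral_diff integrable_add integrable_diff)
  also have "\<dots> = 0"
    using E1 E2 parts by simp
  finally have "integral {0..1} (\<lambda>x. (?A1 x - ?A2 x) + ?u x * deriv \<psi> x + ?u' x * \<psi> x) = 0" .
  moreover have "(\<lambda>x. (?A1 x - ?A2 x) + ?u x * deriv \<psi> x + ?u' x * \<psi> x)
      = (\<lambda>x. (\<epsilon> / 2 * (D1 x - D2 x) + (\<rho>1 x + \<rho>2 x - 1) * (\<rho>1 x - \<rho>2 x)) * deriv \<psi> x
          + (\<Omega>A + \<Omega>D) * (\<rho>1 x - \<rho>2 x) * \<psi> x)"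
    by (simp add: fun_eq_iff field_simps)
  ultimately show ?thesis by simp
qed

section \<open>A comparison argument\<close>

lemma DERIV_nonneg_if_zero_then_positive:
  fixes w :: "real \<Rightarrow> real"
  assumes dw: "(w has_real_derivative L) (at c within S)" and "{c<..<d} \<subseteq> S" "c < d"
    and "w c = 0" and pos: "\<And>y. c < y \<Longrightarrow> y < d \<Longrightarrow> 0 < w y"
  shows "0 \<le> L"
proof (rule tendsto_lowerbound)
  show "((\<lambda>y. (w y - w c) / (y - c)) \<longlongrightarrow> L) (at c within {c<..<d})"
    using dw assms(2) unfolding has_field_derivative_iff by (rule tendsto_within_subset)
  show "\<forall>\<^sub>F y in at c within {c<..<d}. 0 \<le> (w y - w c) / (y - c)"
    using pos \<open>w c = 0\<close> by (auto simp: eventually_at_filter less_imp_le)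
  show "at c within {c<..<d} \<noteq> bot"
    using \<open>c < d\<close> by (simp add: at_within_eq_bot_iff)
qed

lemma DERIV_nonpos_if_positive_then_zero:
  fixes w :: "real \<Rightarrow> real"
  assumes dw: "(w has_real_derivative L) (at d within S)" and "{c<..<d} \<subseteq> S" "c < d"
    and "w d = 0" and pos: "\<And>y. c < y \<Longrightarrow> y < d \<Longrightarrow> 0 < w y"
  shows "L \<le> 0"
proof (rule tendsto_upperbound)
  show "((\<lambda>y. (w y - w d) / (y - d)) \<longlongrightarrow> L) (at d within {c<..<d})"
    using dw assms(2) unfolding has_field_derivative_iff by (rule tendsto_within_subset)
  show "\<forall>\<^sub>F y in at d within {c<..<d}. (w y - w d) / (y - d) \<le> 0"
    using pos \<open>w d = 0\<close> by (auto simp: eventually_at_filter divide_pos_neg less_imp_le)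
  show "at d within {c<..<d} \<noteq> bot"
    using \<open>c < d\<close> by (simp add: at_within_eq_bot_iff)
qed

lemma zeros_around_positive_value:
  fixes w :: "real \<Rightarrow> real"
  assumes cw: "continuous_on {0..1} w" and "w 0 = 0" "w 1 = 0" and x0: "x0 \<in> {0..1}" "0 < w x0"
  obtains c d where "0 \<le> c" "c < d" "d \<le> 1" "w c = 0" "w d = 0" "\<And>y. c < y \<Longrightarrow> y < d \<Longrightarrow> 0 < w y"
proof -
  define Z1 where "Z1 = {0..x0} \<inter> w -` {0}"
  define Z2 where "Z2 = {x0..1} \<inter> w -` {0}"
  have "closed Z1" "closed Z2"
    unfolding Z1_def Z2_def using x0(1)
    by (auto intro!: continuous_closed_preimage continuous_on_subset[OF cw])
  moreover have "0 \<in> Z1" "1 \<in> Z2" "bdd_above Z1" "bdd_below Z2"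
    using assms(2,3) x0(1) unfolding Z1_def Z2_def by (auto intro: bdd_aboveI bdd_belowI)
  ultimately have c: "Sup Z1 \<in> Z1" and d: "Inf Z2 \<in> Z2"
    using closed_contains_Sup closed_contains_Inf by blast+
  have left: "0 < w y" if y: "Sup Z1 < y" "y \<le> x0" for y
  proof (rule ccontr)
    assume "\<not> 0 < w y"
    moreover have "continuous_on {y..x0} w"
      using c y x0 unfolding Z1_def by (auto intro: continuous_on_subset[OF cw])
    ultimately obtain z where z: "y \<le> z" "z \<le> x0" "w z = 0"
      using IVT'[of w y 0 x0] x0(2) y by auto
    then have "z \<in> Z1" using c y unfolding Z1_def by auto
    then show False using cSup_upper[OF _ \<open>bdd_above Z1\<close>] z y by fastforce
  qed
  have right: "0 < w y" if y: "x0 \<le> y" "y < Inf Z2" for y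
  proof (rule ccontr)
    assume "\<not> 0 < w y"
    moreover have "continuous_on {x0..y} w"
      using d y x0 unfolding Z2_def by (auto intro: continuous_on_subset[OF cw])
    ultimately obtain z where z: "x0 \<le> z" "z \<le> y" "w z = 0"
      using IVT2'[of w y 0 x0] x0(2) y by auto
    then have "z \<in> Z2" using d y unfolding Z2_def by auto
    then show False using cInf_lower[OF _ \<open>bdd_below Z2\<close>] z y by fastforce
  qed
  have "Sup Z1 < x0" "x0 < Inf Z2"
    using c d x0(2) unfolding Z1_def Z2_def by (auto simp: less_le)
  moreover have "0 < w y" if "Sup Z1 < y" "y < Inf Z2" for y
    using left right that by (cases "y \<le> x0") auto
  moreover have "0 \<le> Sup Z1" "w (Sup Z1) = 0" "Inf Z2 \<le> 1" "w (Inf Z2) = 0"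
    using c d unfolding Z1_def Z2_def by auto
  ultimately show ?thesis
    by (intro that[of "Sup Z1" "Inf Z2"]) auto
qed

lemma integral_eq_integral_subinterval_if_vanishes:
  fixes f :: "real \<Rightarrow> real"
  assumes "continuous_on {a..b} f" "a \<le> p" "p \<le> q" "q \<le> b"
    and zero: "\<And>x. x \<in> {a..b} \<Longrightarrow> x \<le> p \<or> q \<le> x \<Longrightarrow> f x = 0"
  shows "integral {a..b} f = integral {p..q} f"
proof -
  have int: "f integrable_on {a..b}" "f integrable_on {p..b}"
    using assms(1-4) by (auto intro!: integrable_continuous_real continuous_on_subset[OF assms(1)])
  have "integral {a..b} f = integral {a..p} f + integral {p..q} f + integral {q..b} f"
    using Henstock_Kurzweil_Integration.integral_combine[OF assms(2) _ int(1)]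
      Henstock_Kurzweil_Integration.integral_combine[OF assms(3,4) int(2)] assms(3,4)
    by simp
  moreover have "integral {a..p} f = 0" "integral {q..b} f = 0"
    using zero assms(2-4) by (auto intro!: integral_eq_0_if_vanishes)
  ultimately show ?thesis by simp
qed

lemma integral_mult_step_density_ge:
  fixes V :: "real \<Rightarrow> real"
  assumes pq: "0 \<le> p" "p < q" "q \<le> 1" and cV: "continuous_on {0..1} V"
    and bound: "\<And>x. x \<in> {p..q} \<Longrightarrow> a \<le> V x"
  shows "a \<le> integral {0..1} (\<lambda>x. V x * step_density p q x)"
proof -
  have cV': "continuous_on {p..q} V"
    using pq by (auto intro: continuous_on_subset[OF cV])
  have "a = integral {p..q} (\<lambda>x. a * step_density p q x)"
    using integral_step_density[OF pq(2)] by simp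
  also have "\<dots> \<le> integral {p..q} (\<lambda>x. V x * step_density p q x)"
    using bound step_density_nonneg[OF pq(2)]
    by (intro integral_le integrable_continuous_real continuous_intros cV' continuous_on_step_density)
       (auto intro: mult_right_mono)
  also have "\<dots> = integral {0..1} (\<lambda>x. V x * step_density p q x)"
    using pq step_density_eq_0[OF pq(2)]
    by (intro integral_eq_integral_subinterval_if_vanishes[symmetric] continuous_intros cV
        continuous_on_step_density) auto
  finally show ?thesis .
qed

context
  fixes p q r s :: real
  assumes order: "0 \<le> p" "p < q" "q \<le> r" "r < s" "s \<le> 1"
begin

lemma integral_mult_deriv_plateau_ge:
  fixes V :: "real \<Rightarrow> real"
  assumes cV: "continuous_on {0..1} V"
    and "\<And>x. x \<in> {p..q} \<Longrightarrow> a \<le> V x" "\<And>x. x \<in> {r..s} \<Longrightarrow> V x \<le> b"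
  shows "a - b \<le> integral {0..1} (\<lambda>x. V x * deriv (plateau p q r s) x)"
proof -
  have int: "(\<lambda>x. V x * step_density u v x) integrable_on {0..1}" for u v
    by (intro integrable_continuous_real continuous_intros cV continuous_on_step_density)
  have "a \<le> integral {0..1} (\<lambda>x. V x * step_density p q x)"
    using order assms by (intro integral_mult_step_density_ge) auto
  moreover have "- b \<le> integral {0..1} (\<lambda>x. - V x * step_density r s x)"
    using order assms by (intro integral_mult_step_density_ge continuous_intros) auto
  moreover have "integral {0..1} (\<lambda>x. V x * deriv (plateau p q r s) x)
      = integral {0..1} (\<lambda>x. V x * step_density p q x) + integral {0..1} (\<lambda>x. - V x * step_density r s x)"
    using order int[of p q] int[of r s]
    by (simp add: deriv_plateau right_diff_distrib integral_diff)
  ultimately show ?thesis by simp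
qed

lemma integral_mult_plateau_ge:
  fixes w :: "real \<Rightarrow> real"
  assumes cw: "continuous_on {0..1} w" and nonneg: "\<And>x. x \<in> {p..s} \<Longrightarrow> 0 \<le> w x"
  shows "integral {q..r} w \<le> integral {0..1} (\<lambda>x. w x * plateau p q r s x)"
proof -
  have pl: "plateau p q r s x = 1" if "x \<in> {q..r}" for x
    using that order by (intro plateau_eq_1) auto
  have "integral {q..r} w = integral {q..r} (\<lambda>x. w x * plateau p q r s x)"
    using pl by (intro integral_cong) simp
  also have "\<dots> \<le> integral {0..1} (\<lambda>x. w x * plateau p q r s x)"
  proof (rule integral_subset_le)
    show "(\<lambda>x. w x * plateau p q r s x) integrable_on {0..1}"
      using order by (intro integrable_continuous_real continuous_intros cw continuous_on_plateau)
    then show "(\<lambda>x. w x * plateau p q r s x) integrable_on {q..r}"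
      by (rule integrable_on_subinterval) (use order in auto)
    show "\<forall>x\<in>{0..1}. 0 \<le> w x * plateau p q r s x"
    proof
      fix x :: real assume "x \<in> {0..1}"
      show "0 \<le> w x * plateau p q r s x"
      proof (cases "x \<in> {p..s}")
        case True
        then show ?thesis
          using nonneg plateau_bounds[OF order(2-4)] by simp
      next
        case False
        then have "plateau p q r s x = 0"
          using order by (intro plateau_eq_0) auto
        then show ?thesis by simp
      qed
    qed
  qed (use order in auto)
  finally show ?thesis .
qed

end

lemma steep_plateau_integral_mult_deriv_ge:
  fixes V :: "real \<Rightarrow> real"
  assumes cV: "continuous_on {0..1} V" and cd: "0 \<le> c" "c < d" "d \<le> 1" and "0 < e"
  obtains h where "0 < h" "h \<le> (d - c) / 4"
    "V c - V d - e \<le> integral {0..1} (\<lambda>x. V x * deriv (plateau (c + h / 2) (c + h) (d - h) (d - h / 2)) x)"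
proof -
  have "c \<in> {0..1}" "d \<in> {0..1}" "0 < e / 2"
    using cd \<open>0 < e\<close> by auto
  obtain \<delta>c \<delta>d where "\<delta>c > 0" "\<delta>d > 0"
    and \<delta>c: "\<And>y. y \<in> {0..1} \<Longrightarrow> dist y c \<le> \<delta>c \<Longrightarrow> dist (V y) (V c) < e / 2"
    and \<delta>d: "\<And>y. y \<in> {0..1} \<Longrightarrow> dist y d \<le> \<delta>d \<Longrightarrow> dist (V y) (V d) < e / 2"
    using continuous_onE[OF cV \<open>c \<in> {0..1}\<close> \<open>0 < e / 2\<close>] continuous_onE[OF cV \<open>d \<in> {0..1}\<close> \<open>0 < e / 2\<close>]
    by metis
  define h where "h = min (min \<delta>c \<delta>d) ((d - c) / 4)"
  have h: "0 < h" "h \<le> \<delta>c" "h \<le> \<delta>d" "h \<le> (d - c) / 4"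
    unfolding h_def using \<open>\<delta>c > 0\<close> \<open>\<delta>d > 0\<close> cd min.cobounded2[of "min \<delta>c \<delta>d" "(d - c) / 4"]
    by auto
  have order: "0 \<le> c + h / 2" "c + h / 2 < c + h" "c + h \<le> d - h" "d - h < d - h / 2" "d - h / 2 \<le> 1"
    using h cd by auto
  have "(V c - e / 2) - (V d + e / 2)
      \<le> integral {0..1} (\<lambda>x. V x * deriv (plateau (c + h / 2) (c + h) (d - h) (d - h / 2)) x)"
  proof (rule integral_mult_deriv_plateau_ge[OF order cV])
    show "V c - e / 2 \<le> V x" if "x \<in> {c + h / 2..c + h}" for x
    proof -
      have "\<bar>V x - V c\<bar> < e / 2"
        using \<delta>c[of x] that h cd by (simp add: dist_real_def)
      then show ?thesis by linarith
    qed
    show "V x \<le> V d + e / 2" if "x \<in> {d - h..d - h / 2}" for x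
    proof -
      have "\<bar>V x - V d\<bar> < e / 2"
        using \<delta>d[of x] that h cd by (simp add: dist_real_def)
      then show ?thesis by linarith
    qed
  qed
  then show ?thesis
    using that[OF h(1,4)] by simp
qed

text \<open>The plateau \<open>\<psi>\<close> is 1 on the middle half of \<open>(c, d)\<close> and ramps up so close to \<open>c\<close> and
  down so close to \<open>d\<close> that \<open>\<integral> V \<psi>'\<close> is at least \<open>V c - V d \<ge> 0\<close> up to an error smaller
  than the contribution of \<open>\<Omega> w \<psi>\<close> from the middle half.\<close>

lemma test_fun_with_positive_integral:
  fixes V w :: "real \<Rightarrow> real"
  assumes cV: "continuous_on {0..1} V" and cw: "continuous_on {0..1} w"
    and cd: "0 \<le> c" "c < d" "d \<le> 1" and V: "0 \<le> V c" "V d \<le> 0"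
    and pos: "\<And>y. c < y \<Longrightarrow> y < d \<Longrightarrow> 0 < w y" and \<Omega>: "0 < \<Omega>"
  obtains \<psi> where "test_fun \<psi>" "0 < integral {0..1} (\<lambda>x. V x * deriv \<psi> x + \<Omega> * w x * \<psi> x)"
proof -
  define c' where "c' = c + (d - c) / 4"
  define d' where "d' = d - (d - c) / 4"
  have cd': "c < c'" "c' < d'" "d' < d"
    using cd by (auto simp: c'_def d'_def field_simps)
  have c\<Omega>w: "continuous_on {0..1} (\<lambda>x. \<Omega> * w x)"
    by (intro continuous_intros cw)
  have \<Omega>w_pos: "0 < \<Omega> * w x" if "c < x" "x < d" for x
    using pos[OF that] \<Omega> by simp
  define m where "m = integral {c'..d'} (\<lambda>x. \<Omega> * w x)"
  have "0 < m"
    unfolding m_def using cd cd' \<Omega>w_pos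
    by (intro integral_pos_if_continuous_nonneg[of c' d' _ c'] continuous_on_subset[OF c\<Omega>w])
       (auto simp: less_imp_le)
  then obtain h where h: "0 < h" "h \<le> (d - c) / 4"
    and deriv_part: "V c - V d - m / 2
      \<le> integral {0..1} (\<lambda>x. V x * deriv (plateau (c + h / 2) (c + h) (d - h) (d - h / 2)) x)"
    using steep_plateau_integral_mult_deriv_ge[OF cV cd, of "m / 2"] by auto
  define \<psi> where "\<psi> = plateau (c + h / 2) (c + h) (d - h) (d - h / 2)"
  have order: "0 \<le> c + h / 2" "c + h / 2 < c + h" "c + h \<le> d - h" "d - h < d - h / 2" "d - h / 2 \<le> 1"
    using h cd by auto
  show ?thesis
  proof (rule that)
    show "test_fun \<psi>"
      unfolding \<psi>_def using order h cd by (intro test_fun_plateau) auto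
    have "m \<le> integral {c + h..d - h} (\<lambda>x. \<Omega> * w x)"
    proof -
      have "{c'..d'} \<subseteq> {c + h..d - h}" "{c + h..d - h} \<subseteq> {0..1}"
        using h cd by (auto simp: c'_def d'_def)
      then show ?thesis
        unfolding m_def using cd \<Omega>w_pos h
        by (intro integral_subset_le integrable_continuous_real continuous_on_subset[OF c\<Omega>w])
           (auto simp: less_imp_le)
    qed
    also have "\<dots> \<le> integral {0..1} (\<lambda>x. \<Omega> * w x * \<psi> x)"
      unfolding \<psi>_def using order \<Omega>w_pos
      by (intro integral_mult_plateau_ge[OF order c\<Omega>w]) (auto simp: less_imp_le)
    finally have "m \<le> integral {0..1} (\<lambda>x. \<Omega> * w x * \<psi> x)" .
    moreover have "integral {0..1} (\<lambda>x. V x * deriv \<psi> x + \<Omega> * w x * \<psi> x)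
        = integral {0..1} (\<lambda>x. V x * deriv \<psi> x) + integral {0..1} (\<lambda>x. \<Omega> * w x * \<psi> x)"
      using test_fun_continuous_on[OF \<open>test_fun \<psi>\<close>] test_fun_continuous_on[OF test_fun_deriv[OF \<open>test_fun \<psi>\<close>]]
      by (intro integral_add integrable_continuous_real continuous_intros cV cw)
    ultimately show "0 < integral {0..1} (\<lambda>x. V x * deriv \<psi> x + \<Omega> * w x * \<psi> x)"
      using V \<open>0 < m\<close> deriv_part unfolding \<psi>_def by linarith
  qed
qed

lemma C1_weak_solution_le:
  assumes "\<epsilon> > 0" and "\<Omega>A > 0" and "\<Omega>D > 0"
    and ws1: "weak_solution_S \<epsilon> \<Omega>A \<Omega>D \<alpha> \<beta> \<rho>1" and "C1_01 \<rho>1"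
    and ws2: "weak_solution_S \<epsilon> \<Omega>A \<Omega>D \<alpha> \<beta> \<rho>2" and "C1_01 \<rho>2"
    and x: "x \<in> {0..1}"
  shows "\<rho>1 x \<le> \<rho>2 x"
proof (rule ccontr)
  assume "\<not> \<rho>1 x \<le> \<rho>2 x"
  obtain D1 where cD1: "continuous_on {0..1} D1"
    and dD1: "\<And>x. x \<in> {0..1} \<Longrightarrow> (\<rho>1 has_real_derivative D1 x) (at x within {0..1})"
    using \<open>C1_01 \<rho>1\<close> unfolding C1_01_def by blast
  obtain D2 where cD2: "continuous_on {0..1} D2"
    and dD2: "\<And>x. x \<in> {0..1} \<Longrightarrow> (\<rho>2 has_real_derivative D2 x) (at x within {0..1})"
    using \<open>C1_01 \<rho>2\<close> unfolding C1_01_def by blast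
  define w where "w x = \<rho>1 x - \<rho>2 x" for x
  define V where "V x = \<epsilon> / 2 * (D1 x - D2 x) + (\<rho>1 x + \<rho>2 x - 1) * w x" for x
  have identity: "integral {0..1} (\<lambda>x. V x * deriv \<psi> x + (\<Omega>A + \<Omega>D) * w x * \<psi> x) = 0"
    if "test_fun \<psi>" for \<psi>
    using C1_weak_solutions_difference_identity[OF dD1 dD2 cD1 cD2
        C1_weak_solution_identity[OF ws1 dD1 cD1 that] C1_weak_solution_identity[OF ws2 dD2 cD2 that] that]
    by (simp add: V_def w_def)
  have dw: "(w has_real_derivative D1 x - D2 x) (at x within {0..1})" if "x \<in> {0..1}" for x
    unfolding w_def using dD1[OF that] dD2[OF that] by (rule DERIV_diff)
  have cw: "continuous_on {0..1} w"
    using dw by (rule DERIV_continuous_on)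
  have cV: "continuous_on {0..1} V"
    unfolding V_def by (intro continuous_intros cD1 cD2 cw DERIV_continuous_on[OF dD1] DERIV_continuous_on[OF dD2])
  have "w 0 = 0" "w 1 = 0"
    using ws1 ws2 unfolding weak_solution_S_def w_def by auto
  moreover have "0 < w x"
    using \<open>\<not> \<rho>1 x \<le> \<rho>2 x\<close> by (simp add: w_def)
  ultimately obtain c d where cd: "0 \<le> c" "c < d" "d \<le> 1" and "w c = 0" "w d = 0"
    and pos: "\<And>y. c < y \<Longrightarrow> y < d \<Longrightarrow> 0 < w y"
    using zeros_around_positive_value[OF cw _ _ x] by blast
  have "0 \<le> D1 c - D2 c"
    using cd by (intro DERIV_nonneg_if_zero_then_positive[OF dw _ _ \<open>w c = 0\<close> pos]) auto
  then have "0 \<le> V c"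
    using \<open>\<epsilon> > 0\<close> \<open>w c = 0\<close> by (simp add: V_def)
  have "D1 d - D2 d \<le> 0"
    using cd by (intro DERIV_nonpos_if_positive_then_zero[OF dw _ _ \<open>w d = 0\<close> pos]) auto
  then have "V d \<le> 0"
    using \<open>\<epsilon> > 0\<close> \<open>w d = 0\<close> by (simp add: V_def mult_nonneg_nonpos)
  obtain \<psi> where "test_fun \<psi>" "0 < integral {0..1} (\<lambda>x. V x * deriv \<psi> x + (\<Omega>A + \<Omega>D) * w x * \<psi> x)"
    using test_fun_with_positive_integral[OF cV cw cd \<open>0 \<le> V c\<close> \<open>V d \<le> 0\<close> pos, of "\<Omega>A + \<Omega>D"]
      \<open>\<Omega>A > 0\<close> \<open>\<Omega>D > 0\<close> by auto
  with identity show False by simp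
qed

theorem mainTheorem7:
  fixes \<epsilon> \<Omega>A \<Omega>D \<alpha> \<beta> :: real and \<rho>1 \<rho>2 :: "real \<Rightarrow> real"
  assumes "\<epsilon> > 0" and "\<Omega>A > 0" and "\<Omega>D > 0"
    and "weak_solution_S \<epsilon> \<Omega>A \<Omega>D \<alpha> \<beta> \<rho>1" and "C1_01 \<rho>1"
    and "weak_solution_S \<epsilon> \<Omega>A \<Omega>D \<alpha> \<beta> \<rho>2" and "C1_01 \<rho>2"
  shows "\<forall>x\<in>{0..1}. \<rho>1 x = \<rho>2 x"
  using C1_weak_solution_le[OF assms] C1_weak_solution_le[OF assms(1-3,6,7,4,5)]
  by (simp add: order_antisym)

end
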